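(* Let $ABC$ be a triangle and let $P$ be a point. Let $H_A, H_B, H_C$ be the orthocenters of the triangles $BPC$, $CPA$, $PAB$ respectively. Let $G_A, G_B, G_C$ be the centroids of the triangles $AH_BH_C$, $BH_CH_A$, $CH_AH_B$ respectively, and let $G$ be the centroid of $ABC$. Then $G_A, G_B, G_C, G$ lie on a circle.
   Context: All triangles involved are assumed nondegenerate. *)

theory Defs
  imports "HOL-Analysis.Analysis"
begin

type_synonym point = "real ^ 2"

text \<open>It is well defined for nondegenerate triangles.\<close>
definition orthocenter :: "point \<Rightarrow> point \<Rightarrow> point \<Rightarrow> point" where
  "orthocenter A B C =
     (THE H. inner (H - A) (B - C) = 0 \<and> inner (H - B) (C - A) = 0)"

definition centroid :: "point \<Rightarrow> point \<Rightarrow> point \<Rightarrow> point" where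
  "centroid A B C = (1/3) *\<^sub>R (A + B + C)"

definition concyclic :: "point set \<Rightarrow> bool" where
  "concyclic S \<longleftrightarrow> (\<exists>c r. r > 0 \<and> (\<forall>X\<in>S. dist X c = r))"

end

(* Take P as origin. In triangle PAB the orthocenter H_C lies on the altitude from B, so
   H_C - B is perpendicular to PA, of signed length |PA| cot B; likewise H_B - C in triangle PCA.
   Hence G_A - G = (H_B - C + H_C - B) / 3 is a multiple of PA turned by a right angle: the
   points G_A, G_B, G_C lie on the lines through G perpendicular to PA, PB, PC. Such points
   lie on a common circle through G iff one linear condition on the three multiples holds,
   and for the multiples at hand this condition is a rational identity in the coordinates
   of A, B, C relative to P. *)

theory Submission
  imports Defs
begin

definition rot90 :: "point \<Rightarrow> point" where
  "rot90 v = vector [- v$2, v$1]"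

definition cross2 :: "point \<Rightarrow> point \<Rightarrow> real" where
  "cross2 u v = u$1 * v$2 - u$2 * v$1"

text \<open>The cotangent of the oriented angle from \<open>u\<close> to \<open>v\<close>; the junk value for parallel
  vectors is \<open>0\<close>.\<close>
definition cot_angle :: "point \<Rightarrow> point \<Rightarrow> real" where
  "cot_angle u v = inner u v / cross2 u v"

lemma inner_point: "inner (u::point) v = u$1 * v$1 + u$2 * v$2"
  by (simp add: inner_vec_def sum_2)

lemma power2_norm_point: "(norm (u::point))\<^sup>2 = (u$1)\<^sup>2 + (u$2)\<^sup>2"
  by (simp only: power2_norm_eq_inner) (simp add: inner_point power2_eq_square)

lemma rot90_nth [simp]: "rot90 v $ 1 = - v$2" "rot90 v $ 2 = v$1"
  by (simp_all add: rot90_def)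

lemma cross2_self [simp]: "cross2 u u = 0"
  by (simp add: cross2_def)

lemma cross2_commute: "cross2 v u = - cross2 u v"
  by (simp add: cross2_def)

lemma inner_rot90_left: "inner (rot90 u) v = cross2 u v"
  by (simp add: inner_point cross2_def)

lemma cross2_rot90 [simp]: "cross2 (rot90 u) (rot90 v) = cross2 u v"
  by (simp add: cross2_def algebra_simps)

lemma norm_rot90 [simp]: "norm (rot90 u) = norm u"
  by (simp add: norm_eq_sqrt_inner inner_point algebra_simps)

lemma not_collinear_cross2:
  assumes "\<not> collinear {P, X, Y}"
  shows "cross2 (X - P) (Y - P) \<noteq> 0"
proof
  assume cross: "cross2 (X - P) (Y - P) = 0"
  define u v where "u = X - P" and "v = Y - P"
  have "inner u u *\<^sub>R v = inner u v *\<^sub>R u"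
  proof -
    have "u$1 * v$2 = u$2 * v$1"
      using cross by (simp add: cross2_def u_def v_def)
    then show ?thesis
      unfolding vec_eq_iff forall_2 inner_point by (simp add: algebra_simps)
  qed
  then have "(inner u v / inner u u) *\<^sub>R u = (1 / inner u u) *\<^sub>R (inner u u *\<^sub>R v)"
    by simp
  then have "v = (inner u v / inner u u) *\<^sub>R u" if "u \<noteq> 0"
    using that by simp
  then have "collinear {0, u, v}"
    by (metis collinear_lemma)
  then have "collinear {P, X, Y}"
    using collinear_3[of X P Y] by (simp add: u_def v_def insert_commute)
  with assms show False by simp
qed

lemma orthogonal_to_independent_eq_0:
  assumes "cross2 u v \<noteq> 0" and "inner d u = 0" and "inner d v = 0"
  shows "d = (0::point)"
proof -
  have "cross2 u v * d$1 = v$2 * inner d u - u$2 * inner d v"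
       "cross2 u v * d$2 = u$1 * inner d v - v$1 * inner d u"
    by (simp_all add: cross2_def inner_point algebra_simps)
  then show ?thesis
    using assms by (simp add: vec_eq_iff forall_2)
qed

lemma cross2_linear_dependence: "cross2 v w *\<^sub>R u + cross2 w u *\<^sub>R v + cross2 u v *\<^sub>R w = 0"
  by (simp add: vec_eq_iff forall_2 cross2_def algebra_simps)

lemma inner_equations_solvable:
  assumes uv: "cross2 u v \<noteq> 0"
    and consistent: "cross2 v w * ku + cross2 w u * kv + cross2 u v * kw = 0"
  shows "\<exists>z. inner u z = ku \<and> inner v z = kv \<and> inner w z = kw"
proof (intro exI conjI)
  define z where "z = (1 / cross2 u v) *\<^sub>R (kv *\<^sub>R rot90 u - ku *\<^sub>R rot90 v)"
  show u: "inner u z = ku" and v: "inner v z = kv"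
    using uv by (simp_all add: z_def inner_commute[of _ "rot90 _"] inner_rot90_left
        inner_diff_right cross2_commute[of v u])
  have "inner (cross2 v w *\<^sub>R u + cross2 w u *\<^sub>R v + cross2 u v *\<^sub>R w) z = 0"
    by (simp add: cross2_linear_dependence)
  then have "cross2 v w * ku + cross2 w u * kv + cross2 u v * inner w z = 0"
    by (simp add: inner_add_left u v)
  with consistent have "cross2 u v * inner w z = cross2 u v * kw"
    by linarith
  then show "inner w z = kw"
    using uv by simp
qed

lemma orthocenter_eqI:
  assumes "\<not> collinear {X, Y, Z}"
    and "inner (H - X) (Y - Z) = 0" and "inner (H - Y) (Z - X) = 0"
  shows "orthocenter X Y Z = H"
  unfolding orthocenter_def
proof (rule the_equality)
  show "inner (H - X) (Y - Z) = 0 \<and> inner (H - Y) (Z - X) = 0"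
    using assms by simp
next
  fix K
  assume K: "inner (K - X) (Y - Z) = 0 \<and> inner (K - Y) (Z - X) = 0"
  have "cross2 (Y - Z) (Z - X) \<noteq> 0"
    using not_collinear_cross2[of Z X Y] assms(1)
    by (simp add: insert_commute cross2_def algebra_simps)
  moreover have "inner (K - H) (Y - Z) = 0" "inner (K - H) (Z - X) = 0"
    using assms K by (simp_all add: inner_diff_left algebra_simps)
  ultimately have "K - H = 0"
    by (rule orthogonal_to_independent_eq_0)
  then show "K = H" by simp
qed

text \<open>The orthocenter lies on the altitude from \<open>Z\<close>, at signed distance
  \<open>|XY| cot Z\<close> from \<open>Z\<close>.\<close>
lemma altitudes_concurrent:
  assumes "\<not> collinear {X, Y, Z}"
  defines "H \<equiv> Z + cot_angle (Y - Z) (X - Z) *\<^sub>R rot90 (Y - X)"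
  shows "inner (H - X) (Y - Z) = 0" "inner (H - Y) (Z - X) = 0" "inner (H - Z) (X - Y) = 0"
proof -
  define u v where "u = Y - Z" and "v = X - Z"
  have uv: "cross2 u v \<noteq> 0"
    using not_collinear_cross2[of Z Y X] assms(1) by (simp add: insert_commute u_def v_def)
  have eqs: "H - X = cot_angle u v *\<^sub>R rot90 (u - v) - v"
      "H - Y = cot_angle u v *\<^sub>R rot90 (u - v) - u" "H - Z = cot_angle u v *\<^sub>R rot90 (u - v)"
      "Y - Z = u" "Z - X = - v" "X - Y = v - u"
    by (simp_all add: H_def u_def v_def)
  show "inner (H - X) (Y - Z) = 0" "inner (H - Y) (Z - X) = 0" "inner (H - Z) (X - Y) = 0"
    unfolding eqs cot_angle_def using uv by (simp_all add: inner_point cross2_def field_simps)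
qed

lemma orthocenter_vertex:
  assumes "\<not> collinear {X, Y, Z}"
  shows "orthocenter X Y Z = Z + cot_angle (Y - Z) (X - Z) *\<^sub>R rot90 (Y - X)"
  using altitudes_concurrent(1,2)[OF assms] by (rule orthocenter_eqI[OF assms])

lemma orthocenter_altitudes:
  assumes "\<not> collinear {X, Y, Z}"
  shows "inner (orthocenter X Y Z - X) (Y - Z) = 0" "inner (orthocenter X Y Z - Y) (Z - X) = 0"
    "inner (orthocenter X Y Z - Z) (X - Y) = 0"
  unfolding orthocenter_vertex[OF assms] by (fact altitudes_concurrent[OF assms])+

lemma orthocenter_permute:
  assumes "\<not> collinear {X, Y, Z}"
  shows "orthocenter Y Z X = orthocenter X Y Z" "orthocenter Y X Z = orthocenter X Y Z"
    "orthocenter X Z Y = orthocenter X Y Z"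
  using assms orthocenter_altitudes[OF assms]
  by (auto intro!: orthocenter_eqI simp: insert_commute inner_diff_right)

lemma centroid_orthocenters_offset:
  assumes "\<not> collinear {P, A, B}" and "\<not> collinear {P, A, C}"
  shows "centroid A (orthocenter P A C) (orthocenter P A B) = centroid A B C
    + ((cot_angle (A - B) (P - B) + cot_angle (A - C) (P - C)) / 3) *\<^sub>R rot90 (A - P)"
proof -
  have "centroid A (C + s *\<^sub>R v) (B + t *\<^sub>R v) = centroid A B C + ((t + s) / 3) *\<^sub>R v"
    for s t and v :: point
    by (simp add: centroid_def vec_eq_iff forall_2 field_simps)
  then show ?thesis
    unfolding orthocenter_vertex[OF assms(1)] orthocenter_vertex[OF assms(2)] .
qed

lemma dist_add_eq_norm_iff:
  fixes x g z :: "'a::real_inner"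
  shows "dist x (g + z) = norm z \<longleftrightarrow> (norm (x - g))\<^sup>2 = 2 * inner (x - g) z"
proof -
  have "dist x (g + z) = norm ((x - g) - z)"
    by (simp add: dist_norm algebra_simps)
  then have "dist x (g + z) = norm z \<longleftrightarrow> (norm ((x - g) - z))\<^sup>2 = (norm z)\<^sup>2"
    by (metis norm_ge_zero power2_eq_iff_nonneg)
  also have "\<dots> \<longleftrightarrow> (norm (x - g))\<^sup>2 = 2 * inner (x - g) z"
    by (auto simp: power2_norm_eq_inner inner_diff_left inner_diff_right inner_commute)
  finally show ?thesis .
qed

lemma concyclic_if_equidistant:
  assumes "\<forall>X\<in>S. dist X c = r"
  shows "concyclic S"
proof (cases "r > 0")
  case True
  with assms show ?thesis
    unfolding concyclic_def by blast
next
  case False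
  with assms have "S \<subseteq> {c}"
    by force
  then have "\<forall>X\<in>S. dist X (c + axis 1 1) = 1"
    by (auto simp: dist_norm)
  then show ?thesis
    unfolding concyclic_def by (intro exI[of _ "c + axis 1 1"] exI[of _ 1]) simp
qed

text \<open>A circle through \<open>G\<close> with centre \<open>G + z\<close> meets the line \<open>G + \<real> u\<close> again at
  \<open>G + s u\<close> exactly when \<open>\<langle>u, z\<rangle> = s |u|\<^sup>2 / 2\<close>.\<close>
lemma concyclic_on_lines_through:
  fixes G u v w :: point
  assumes "cross2 u v \<noteq> 0"
    and "cross2 v w * s * (norm u)\<^sup>2 + cross2 w u * t * (norm v)\<^sup>2
       + cross2 u v * r * (norm w)\<^sup>2 = 0"
  shows "concyclic {G + s *\<^sub>R u, G + t *\<^sub>R v, G + r *\<^sub>R w, G}"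
proof -
  have "cross2 v w * (s * (norm u)\<^sup>2 / 2) + cross2 w u * (t * (norm v)\<^sup>2 / 2)
      + cross2 u v * (r * (norm w)\<^sup>2 / 2) = 0"
    using assms(2) by (simp add: field_simps)
  then obtain z where z: "inner u z = s * (norm u)\<^sup>2 / 2" "inner v z = t * (norm v)\<^sup>2 / 2"
      "inner w z = r * (norm w)\<^sup>2 / 2"
    using inner_equations_solvable[OF assms(1)] by blast
  have "dist (G + k *\<^sub>R y) (G + z) = norm z" if "inner y z = k * (norm y)\<^sup>2 / 2" for k y
  proof -
    have "(norm (k *\<^sub>R y))\<^sup>2 = k * (k * (norm y)\<^sup>2)"
      by (simp add: power_mult_distrib power2_eq_square)
    then show ?thesis
      unfolding dist_add_eq_norm_iff using that by simp
  qed
  then have "\<forall>X\<in>{G + s *\<^sub>R u, G + t *\<^sub>R v, G + r *\<^sub>R w, G}. dist X (G + z) = norm z"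
    using z by (auto simp: dist_norm)
  then show ?thesis
    by (rule concyclic_if_equidistant)
qed

lemma cot_weighted_sum_eq_0:
  assumes "cross2 (A - P) (B - P) \<noteq> 0" "cross2 (B - P) (C - P) \<noteq> 0" "cross2 (C - P) (A - P) \<noteq> 0"
  shows "cross2 (B - P) (C - P) * (cot_angle (A - B) (P - B) + cot_angle (A - C) (P - C)) * (norm (A - P))\<^sup>2
       + cross2 (C - P) (A - P) * (cot_angle (B - C) (P - C) + cot_angle (B - A) (P - A)) * (norm (B - P))\<^sup>2
       + cross2 (A - P) (B - P) * (cot_angle (C - A) (P - A) + cot_angle (C - B) (P - B)) * (norm (C - P))\<^sup>2
       = 0"
proof -
  define a b c where "a = A - P" and "b = B - P" and "c = C - P"
  have cot: "cot_angle (x - y) (- y) = (inner y y - inner x y) / - cross2 x y" for x y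
    by (simp add: cot_angle_def cross2_def inner_point algebra_simps)
  have diffs: "A - B = a - b" "A - C = a - c" "B - C = b - c" "B - A = b - a" "C - A = c - a"
      "C - B = c - b" "P - A = - a" "P - B = - b" "P - C = - c"
    by (simp_all add: a_def b_def c_def)
  obtain a1 a2 b1 b2 c1 c2 where coords: "a$1 = a1" "a$2 = a2" "b$1 = b1" "b$2 = b2" "c$1 = c1" "c$2 = c2"
    by blast
  \<comment> \<open>The denominators are kept abstract until they have been cleared; expanding them
    first makes the polynomial arithmetic far slower.\<close>
  obtain D1 D2 D3 where D: "cross2 a b = D1" "cross2 b c = D2" "cross2 c a = D3"
    by blast
  have D_coords: "D1 = a1 * b2 - a2 * b1" "D2 = b1 * c2 - b2 * c1" "D3 = c1 * a2 - c2 * a1"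
    using D coords by (auto simp: cross2_def)
  have D_commute: "cross2 b a = - D1" "cross2 c b = - D2" "cross2 a c = - D3"
    using D by (simp_all add: cross2_commute[of b a] cross2_commute[of c b] cross2_commute[of a c])
  show ?thesis
    using assms unfolding diffs cot a_def[symmetric] b_def[symmetric] c_def[symmetric] D_commute D
    by (simp add: field_simps) (unfold inner_point power2_norm_point coords D_coords, algebra)
qed

theorem theorem3p1:
  fixes A B C P :: point
  assumes "\<not> collinear {A, B, C}"
    and "\<not> collinear {B, P, C}"
    and "\<not> collinear {C, P, A}"
    and "\<not> collinear {P, A, B}"
  shows "concyclic
    {centroid A (orthocenter C P A) (orthocenter P A B),
     centroid B (orthocenter P A B) (orthocenter B P C),
     centroid C (orthocenter B P C) (orthocenter C P A),
     centroid A B C}"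
proof -
  have nc: "\<not> collinear {P, A, B}" "\<not> collinear {P, A, C}" "\<not> collinear {P, B, C}"
      "\<not> collinear {P, B, A}" "\<not> collinear {P, C, A}" "\<not> collinear {P, C, B}"
    using assms(2-4) by (simp_all add: insert_commute)
  note perms = orthocenter_permute[OF assms(2)] orthocenter_permute[OF assms(3)]
    orthocenter_permute[OF assms(4)]
  have "centroid B C A = centroid A B C" "centroid C A B = centroid A B C"
    by (simp_all add: centroid_def add_ac)
  moreover note centroid_orthocenters_offset[OF nc(1,2)]
    centroid_orthocenters_offset[OF nc(3,4)] centroid_orthocenters_offset[OF nc(5,6)]
  ultimately have offsets:
    "centroid A (orthocenter C P A) (orthocenter P A B) = centroid A B C
      + ((cot_angle (A - B) (P - B) + cot_angle (A - C) (P - C)) / 3) *\<^sub>R rot90 (A - P)"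
    "centroid B (orthocenter P A B) (orthocenter B P C) = centroid A B C
      + ((cot_angle (B - C) (P - C) + cot_angle (B - A) (P - A)) / 3) *\<^sub>R rot90 (B - P)"
    "centroid C (orthocenter B P C) (orthocenter C P A) = centroid A B C
      + ((cot_angle (C - A) (P - A) + cot_angle (C - B) (P - B)) / 3) *\<^sub>R rot90 (C - P)"
    unfolding perms by simp_all
  have cross: "cross2 (A - P) (B - P) \<noteq> 0" "cross2 (B - P) (C - P) \<noteq> 0"
      "cross2 (C - P) (A - P) \<noteq> 0"
    using nc by (simp_all add: not_collinear_cross2)
  show ?thesis
    unfolding offsets using cross cot_weighted_sum_eq_0[OF cross]
    by (intro concyclic_on_lines_through) (simp_all add: field_simps)
qed

end
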